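(* Let $\mathbf{u}_j\in c_0$, $j\in\mathbb{N}_m$, be linearly independent, let $\mathcal{L}:\ell_1(\mathbb{N})\to\mathbb{R}^m$ be $\mathcal{L}(\mathbf{x}):=[\langle\mathbf{u}_j,\mathbf{x}\rangle:j\in\mathbb{N}_m]$, let $\mathbf{y}\in\mathbb{R}^m$ and $\mathcal{M}_{\mathbf{y}}:=\{\mathbf{x}\in\ell_1(\mathbb{N}):\mathcal{L}(\mathbf{x})=\mathbf{y}\}$. Then $\hat{\mathbf{x}}\in\ell_1(\mathbb{N})$ is a solution of $\inf\{\|\mathbf{x}\|_1:\mathbf{x}\in\mathcal{M}_{\mathbf{y}}\}$ if and only if $\hat{\mathbf{x}}\in\mathcal{M}_{\mathbf{y}}$ and there exist $c_j\in\mathbb{R}$, $j\in\mathbb{N}_m$, such that, with $\mathbf{u}:=\sum_{j\in\mathbb{N}_m}c_j\mathbf{u}_j$, $$\hat{\mathbf{x}}\in\|\mathbf{u}\|_\infty\,\mathrm{co}(\mathcal{V}(\mathbf{u})).$$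
   Context: $\ell_1(\mathbb{N})$ is the space of real sequences with $\|\mathbf{x}\|_1=\sum_j|x_j|<\infty$; $c_0$ is the space of real sequences tending to $0$ with norm $\|\mathbf{u}\|_\infty=\sup_j|u_j|$; $\langle\mathbf{u},\mathbf{x}\rangle:=\sum_{j\in\mathbb{N}}u_jx_j$. $\mathbb{N}_m:=\{1,\dots,m\}$. For $\mathbf{u}\in c_0$, $\mathbb{N}(\mathbf{u}):=\{j\in\mathbb{N}:|u_j|=\|\mathbf{u}\|_\infty\}$, and $\mathcal{V}(\mathbf{u}):=\{\mathrm{sign}(u_j)\mathbf{e}_j:j\in\mathbb{N}(\mathbf{u})\}$, where $\mathbf{e}_j$ is the $j$-th unit sequence. $\mathrm{co}(\mathcal{V})$ denotes the set of all finite convex combinations of elements of $\mathcal{V}$. *)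

theory Defs
  imports "HOL-Analysis.Analysis"
begin

definition ell1 :: "(nat \<Rightarrow> real) set" where
  "ell1 = {x. summable (\<lambda>j. \<bar>x j\<bar>)}"

definition c0 :: "(nat \<Rightarrow> real) set" where
  "c0 = {u. u \<longlonglongrightarrow> 0}"

definition norm1 :: "(nat \<Rightarrow> real) \<Rightarrow> real" where
  "norm1 x = (\<Sum>j. \<bar>x j\<bar>)"

definition supnorm :: "(nat \<Rightarrow> real) \<Rightarrow> real" where
  "supnorm u = (SUP j. \<bar>u j\<bar>)"

definition pairing :: "(nat \<Rightarrow> real) \<Rightarrow> (nat \<Rightarrow> real) \<Rightarrow> real" where
  "pairing u x = (\<Sum>j. u j * x j)"

definition unitseq :: "nat \<Rightarrow> nat \<Rightarrow> real" where
  "unitseq j = (\<lambda>k. if k = j then 1 else 0)"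

definition maxidx :: "(nat \<Rightarrow> real) \<Rightarrow> nat set" where
  "maxidx u = {j. \<bar>u j\<bar> = supnorm u}"

definition Vset :: "(nat \<Rightarrow> real) \<Rightarrow> (nat \<Rightarrow> real) set" where
  "Vset u = {(\<lambda>k. sgn (u j) * unitseq j k) | j. j \<in> maxidx u}"

definition co :: "(nat \<Rightarrow> real) set \<Rightarrow> (nat \<Rightarrow> real) set" where
  "co V = {x. \<exists>S w. finite S \<and> S \<subseteq> V \<and> (\<forall>v\<in>S. 0 \<le> w v) \<and> sum w S = 1
              \<and> x = (\<lambda>k. \<Sum>v\<in>S. w v * v k)}"

definition lin_indep_family :: "nat \<Rightarrow> (nat \<Rightarrow> nat \<Rightarrow> real) \<Rightarrow> bool" where
  "lin_indep_family m us \<longleftrightarrow>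
     (\<forall>c. (\<forall>k. (\<Sum>j\<in>{1..m}. c j * us j k) = 0) \<longrightarrow> (\<forall>j\<in>{1..m}. c j = 0))"

definition Mset :: "nat \<Rightarrow> (nat \<Rightarrow> nat \<Rightarrow> real) \<Rightarrow> (nat \<Rightarrow> real) \<Rightarrow> (nat \<Rightarrow> real) set" where
  "Mset m us y = {x \<in> ell1. \<forall>j\<in>{1..m}. pairing (us j) x = y j}"

end

theory Submission
  imports Defs
begin

(* If xh = ||u||_inf z with z in co(V(u)), then <u, xh> = ||u||_inf ||xh||_1, whereas every x with
   L x = y has <u, x> = <u, xh> (u being a combination of the u_j) and <u, x> <= ||u||_inf ||x||_1;
   so xh has minimal norm.  Conversely, if xh has minimal norm, a Hahn-Banach argument relative to
   the finitely many constraints <u_j, .> produces a combination u of the u_j with <u, .> <= ||.||_1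
   and <u, xh> = ||xh||_1.  Then u_k xh_k = |xh_k| for every k, so xh lives on the set where
   |u_k| = 1, which is finite because u is in c0, with the signs of u; rescaling u by ||xh||_1
   turns this into the required convex combination of signed unit vectors. *)

section \<open>Hahn-Banach for finitely many linear constraints\<close>

definition linear_form_on :: "('i \<Rightarrow> real) set \<Rightarrow> (('i \<Rightarrow> real) \<Rightarrow> real) \<Rightarrow> bool" where
  "linear_form_on X f \<longleftrightarrow>
     (\<forall>x\<in>X. \<forall>z\<in>X. f (\<lambda>k. x k + z k) = f x + f z) \<and> (\<forall>x\<in>X. \<forall>t. f (\<lambda>k. t * x k) = t * f x)"

lemma linear_form_onD:
  assumes "linear_form_on X f" "x \<in> X"
  shows "z \<in> X \<Longrightarrow> f (\<lambda>k. x k + z k) = f x + f z" and "f (\<lambda>k. t * x k) = t * f x"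
  using assms unfolding linear_form_on_def by blast+

lemma linear_form_on_subset: "linear_form_on X f \<Longrightarrow> K \<subseteq> X \<Longrightarrow> linear_form_on K f"
  unfolding linear_form_on_def by blast

lemma linear_form_on_scale: "linear_form_on X f \<Longrightarrow> linear_form_on X (\<lambda>x. a * f x)"
  unfolding linear_form_on_def by (simp add: algebra_simps)

lemma linear_form_on_diff:
  "linear_form_on X f \<Longrightarrow> linear_form_on X g \<Longrightarrow> linear_form_on X (\<lambda>x. f x - c * g x)"
  unfolding linear_form_on_def by (simp add: algebra_simps)

locale sublinear_space =
  fixes X :: "('i \<Rightarrow> real) set" and N :: "('i \<Rightarrow> real) \<Rightarrow> real"
  assumes add_closed: "x \<in> X \<Longrightarrow> z \<in> X \<Longrightarrow> (\<lambda>k. x k + z k) \<in> X"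
    and scale_closed: "x \<in> X \<Longrightarrow> (\<lambda>k. t * x k) \<in> X"
    and triangle: "x \<in> X \<Longrightarrow> z \<in> X \<Longrightarrow> N (\<lambda>k. x k + z k) \<le> N x + N z"
    and pos_homogeneous: "x \<in> X \<Longrightarrow> 0 \<le> t \<Longrightarrow> N (\<lambda>k. t * x k) = t * N x"
begin

lemma kernel_sublinear_space:
  assumes "\<And>j. j \<in> J \<Longrightarrow> linear_form_on X (\<psi> j)"
  shows "sublinear_space {x \<in> X. \<forall>j\<in>J. \<psi> j x = 0} N"
  using assms by unfold_locales
    (auto simp: linear_form_on_def add_closed scale_closed triangle pos_homogeneous)

context
  fixes \<phi> \<psi> :: "('i \<Rightarrow> real) \<Rightarrow> real"
  assumes \<phi>: "linear_form_on X \<phi>" and \<psi>: "linear_form_on X \<psi>"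
    and dominated: "\<And>x. x \<in> X \<Longrightarrow> \<psi> x = 0 \<Longrightarrow> \<phi> x \<le> N x"
begin

(* Rescaling x and z to psi-values 1 and -1 and adding them gives a point of the kernel of psi. *)
lemma hahn_banach_ratio_le:
  assumes x: "x \<in> X" "\<psi> x > 0" and z: "z \<in> X" "\<psi> z < 0"
  shows "(\<phi> x - N x) / \<psi> x \<le> (N z - \<phi> z) / - \<psi> z"
proof -
  define x' where "x' = (\<lambda>k. (1 / \<psi> x) * x k)"
  define z' where "z' = (\<lambda>k. (1 / - \<psi> z) * z k)"
  have X: "x' \<in> X" "z' \<in> X" unfolding x'_def z'_def by (rule scale_closed, fact)+
  have "\<psi> x' = 1" unfolding x'_def using linear_form_onD(2)[OF \<psi> x(1), of "1 / \<psi> x"] x by simp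
  moreover have "\<psi> z' = -1"
    unfolding z'_def using linear_form_onD(2)[OF \<psi> z(1), of "1 / - \<psi> z"] z by simp
  ultimately have "\<psi> (\<lambda>k. x' k + z' k) = 0" using linear_form_onD(1)[OF \<psi> X] by simp
  then have "\<phi> (\<lambda>k. x' k + z' k) \<le> N (\<lambda>k. x' k + z' k)"
    using dominated add_closed X by blast
  also have "\<dots> \<le> N x' + N z'" using triangle X by blast
  finally have sum_le: "\<phi> x' + \<phi> z' \<le> N x' + N z'" using linear_form_onD(1)[OF \<phi> X] by simp
  have \<phi>_eq: "\<phi> x' = \<phi> x / \<psi> x" "\<phi> z' = \<phi> z / - \<psi> z"
    unfolding x'_def z'_def
    using linear_form_onD(2)[OF \<phi> x(1), of "1 / \<psi> x"] linear_form_onD(2)[OF \<phi> z(1), of "1 / - \<psi> z"]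
    by simp_all
  have N_eq: "N x' = N x / \<psi> x" "N z' = N z / - \<psi> z"
    unfolding x'_def z'_def
    using pos_homogeneous[OF x(1), of "1 / \<psi> x"] pos_homogeneous[OF z(1), of "1 / - \<psi> z"] x z
    by simp_all
  show ?thesis
    using sum_le unfolding \<phi>_eq N_eq diff_divide_distrib by linarith
qed

lemma hahn_banach_codim1: "\<exists>c. \<forall>x\<in>X. \<phi> x - c * \<psi> x \<le> N x"
proof -
  define A where "A = {(\<phi> x - N x) / \<psi> x | x. x \<in> X \<and> \<psi> x > 0}"
  have neg: "(\<lambda>k. - x k) \<in> X" "\<psi> (\<lambda>k. - x k) = - \<psi> x" if "x \<in> X" for x
    using scale_closed[OF that, of "-1"] linear_form_onD(2)[OF \<psi> that, of "-1"] by simp_all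
  have "\<phi> x - Sup A * \<psi> x \<le> N x" if x: "x \<in> X" for x
  proof (cases "\<psi> x" "0 :: real" rule: linorder_cases)
    case less
    have "A \<noteq> {}" using neg[OF x] less unfolding A_def by force
    then have "Sup A \<le> (N x - \<phi> x) / - \<psi> x"
      by (rule cSup_least) (use hahn_banach_ratio_le x less in \<open>auto simp: A_def\<close>)
    then have "Sup A * - \<psi> x \<le> N x - \<phi> x" using less by (subst (asm) pos_le_divide_eq) simp_all
    then show ?thesis by (simp add: algebra_simps)
  next
    case equal
    then show ?thesis using dominated x by simp
  next
    case greater
    have A_bdd: "bdd_above A"
    proof (rule bdd_aboveI)
      fix a assume "a \<in> A"
      then obtain x' where "x' \<in> X" "\<psi> x' > 0" "a = (\<phi> x' - N x') / \<psi> x'" by (auto simp: A_def)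
      then show "a \<le> (N (\<lambda>k. - x k) - \<phi> (\<lambda>k. - x k)) / - \<psi> (\<lambda>k. - x k)"
        using hahn_banach_ratio_le[of x' "\<lambda>k. - x k"] neg[OF x] greater by auto
    qed
    have "(\<phi> x - N x) / \<psi> x \<le> Sup A"
      by (rule cSup_upper[OF _ A_bdd]) (use x greater in \<open>auto simp: A_def\<close>)
    then show ?thesis using greater by (simp add: pos_divide_le_eq algebra_simps)
  qed
  then show ?thesis by blast
qed

end

end

lemma (in sublinear_space) hahn_banach_finite_codim:
  assumes "finite J" and "\<And>j. j \<in> J \<Longrightarrow> linear_form_on X (\<psi> j)" and "linear_form_on X \<phi>"
    and "\<And>x. x \<in> X \<Longrightarrow> \<forall>j\<in>J. \<psi> j x = 0 \<Longrightarrow> \<phi> x \<le> N x"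
  shows "\<exists>d. \<forall>x\<in>X. \<phi> x - (\<Sum>j\<in>J. d j * \<psi> j x) \<le> N x"
  using assms
proof (induction J arbitrary: \<phi> rule: finite_induct)
  case empty
  then show ?case by simp
next
  case (insert a J)
  define K where "K = {x \<in> X. \<forall>j\<in>J. \<psi> j x = 0}"
  interpret K: sublinear_space K N
    unfolding K_def by (rule kernel_sublinear_space) (use insert.prems in auto)
  have "K \<subseteq> X" by (auto simp: K_def)
  then have "linear_form_on K \<phi>" "linear_form_on K (\<psi> a)"
    using insert.prems(1)[of a] insert.prems(2) linear_form_on_subset by auto
  moreover have "\<phi> x \<le> N x" if "x \<in> K" "\<psi> a x = 0" for x
    using insert.prems(3) that by (auto simp: K_def)
  ultimately obtain c where c: "\<forall>x\<in>K. \<phi> x - c * \<psi> a x \<le> N x"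
    using K.hahn_banach_codim1 by blast
  have "\<exists>d. \<forall>x\<in>X. \<phi> x - c * \<psi> a x - (\<Sum>j\<in>J. d j * \<psi> j x) \<le> N x"
  proof (rule insert.IH)
    show "linear_form_on X (\<lambda>x. \<phi> x - c * \<psi> a x)"
      using insert.prems(1,2) by (simp add: linear_form_on_diff)
    show "\<phi> x - c * \<psi> a x \<le> N x" if "x \<in> X" "\<forall>j\<in>J. \<psi> j x = 0" for x
      using c that by (simp add: K_def)
  qed (use insert.prems(1) in simp)
  then obtain d where d: "\<forall>x\<in>X. \<phi> x - c * \<psi> a x - (\<Sum>j\<in>J. d j * \<psi> j x) \<le> N x" ..
  have "(\<Sum>j\<in>J. (d(a := c)) j * \<psi> j x) = (\<Sum>j\<in>J. d j * \<psi> j x)" for x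
    using \<open>a \<notin> J\<close> by (intro sum.cong) auto
  then have "(\<Sum>j\<in>insert a J. (d(a := c)) j * \<psi> j x) = c * \<psi> a x + (\<Sum>j\<in>J. d j * \<psi> j x)" for x
    using insert.hyps by simp
  then show ?case using d by (intro exI[of _ "d(a := c)"]) (simp add: algebra_simps)
qed

section \<open>Sequence spaces\<close>

lemma c0_imp_Bseq: "u \<in> c0 \<Longrightarrow> Bseq u"
  unfolding c0_def by (blast intro: convergent_imp_Bseq convergentI)

lemma c0_lincomb: "finite J \<Longrightarrow> (\<And>j. j \<in> J \<Longrightarrow> w j \<in> c0) \<Longrightarrow> (\<lambda>k. \<Sum>j\<in>J. c j * w j k) \<in> c0"
  unfolding c0_def by (auto intro!: tendsto_null_sum tendsto_mult_right_zero)

lemma c0_finite_abs_ge: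
  assumes "u \<in> c0" "0 < e"
  shows "finite {k. e \<le> \<bar>u k\<bar>}"
proof -
  obtain N where "\<forall>n\<ge>N. \<bar>u n\<bar> < e" using LIMSEQ_D[of u 0 e] assms by (auto simp: c0_def)
  then have "{k. e \<le> \<bar>u k\<bar>} \<subseteq> {..<N}" by (auto simp: not_less[symmetric])
  then show ?thesis by (rule finite_subset) simp
qed

lemma abs_le_supnorm: "Bseq u \<Longrightarrow> \<bar>u k\<bar> \<le> supnorm u"
  unfolding supnorm_def by (rule cSUP_upper) (auto simp: Bseq_def bdd_above_def)

lemma supnorm_le: "(\<And>k. \<bar>u k\<bar> \<le> B) \<Longrightarrow> supnorm u \<le> B"
  unfolding supnorm_def by (rule cSUP_least) auto

lemma supnorm_nonneg: "Bseq u \<Longrightarrow> 0 \<le> supnorm u"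
  using abs_le_supnorm[of u 0] by linarith

lemma supnorm_scale:
  assumes "Bseq u" "0 \<le> r"
  shows "supnorm (\<lambda>k. r * u k) = r * supnorm u"
proof (rule antisym)
  show "supnorm (\<lambda>k. r * u k) \<le> r * supnorm u"
    using assms abs_le_supnorm by (intro supnorm_le) (simp add: abs_mult mult_left_mono)
  show "r * supnorm u \<le> supnorm (\<lambda>k. r * u k)"
  proof (cases "r = 0")
    case True
    then show ?thesis by (simp add: supnorm_def)
  next
    case False
    have "Bseq (\<lambda>k. r * u k)" using assms(1) False by (simp add: Bseq_cmult_iff)
    then have "\<bar>u k\<bar> \<le> supnorm (\<lambda>k. r * u k) / r" for k
      using abs_le_supnorm[of "\<lambda>k. r * u k" k] assms(2) False
      by (simp add: abs_mult pos_le_divide_eq mult.commute)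
    then have "supnorm u \<le> supnorm (\<lambda>k. r * u k) / r" by (rule supnorm_le)
    then show ?thesis using assms(2) False by (simp add: pos_le_divide_eq mult.commute)
  qed
qed

lemma Vset_scale: "Bseq u \<Longrightarrow> 0 < r \<Longrightarrow> Vset (\<lambda>k. r * u k) = Vset u"
  unfolding Vset_def maxidx_def by (simp add: supnorm_scale abs_mult sgn_mult)

lemma summable_mult_ell1:
  assumes "Bseq u" "x \<in> ell1"
  shows "summable (\<lambda>k. u k * x k)"
proof -
  obtain B where B: "\<And>k. \<bar>u k\<bar> \<le> B" using BseqE[OF assms(1)] by (metis real_norm_def)
  show ?thesis
  proof (rule summable_comparison_test')
    show "summable (\<lambda>k. B * \<bar>x k\<bar>)" using assms(2) by (simp add: ell1_def summable_mult)
    show "norm (u k * x k) \<le> B * \<bar>x k\<bar>" for k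
      using B[of k] by (simp add: abs_mult mult_right_mono)
  qed
qed

lemma norm1_nonneg: "x \<in> ell1 \<Longrightarrow> 0 \<le> norm1 x"
  unfolding norm1_def ell1_def by (auto intro: suminf_nonneg)

lemma norm1_eq_0_iff: "x \<in> ell1 \<Longrightarrow> norm1 x = 0 \<longleftrightarrow> x = (\<lambda>k. 0)"
  unfolding norm1_def ell1_def by (simp add: suminf_eq_zero_iff fun_eq_iff)

lemma norm1_scale: "x \<in> ell1 \<Longrightarrow> norm1 (\<lambda>k. t * x k) = \<bar>t\<bar> * norm1 x"
  unfolding norm1_def ell1_def by (simp add: abs_mult suminf_mult)

lemma ell1_add:
  assumes "x \<in> ell1" "z \<in> ell1"
  shows "(\<lambda>k. x k + z k) \<in> ell1"
proof -
  have "summable (\<lambda>k. \<bar>x k\<bar> + \<bar>z k\<bar>)" using assms unfolding ell1_def by (intro summable_add) auto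
  then have "summable (\<lambda>k. \<bar>x k + z k\<bar>)" by (rule summable_comparison_test') (simp add: abs_triangle_ineq)
  then show ?thesis by (simp add: ell1_def)
qed

lemma ell1_scale: "x \<in> ell1 \<Longrightarrow> (\<lambda>k. t * x k) \<in> ell1"
  unfolding ell1_def by (simp add: abs_mult summable_mult)

lemma norm1_triangle:
  assumes "x \<in> ell1" "z \<in> ell1"
  shows "norm1 (\<lambda>k. x k + z k) \<le> norm1 x + norm1 z"
proof -
  have "norm1 (\<lambda>k. x k + z k) \<le> (\<Sum>k. \<bar>x k\<bar> + \<bar>z k\<bar>)"
    unfolding norm1_def using assms ell1_add[OF assms] unfolding ell1_def
    by (intro suminf_le summable_add abs_triangle_ineq) auto
  also have "\<dots> = norm1 x + norm1 z"
    using assms unfolding norm1_def ell1_def by (simp add: suminf_add)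
  finally show ?thesis .
qed

interpretation ell1: sublinear_space ell1 norm1
  by unfold_locales (simp_all add: ell1_add ell1_scale norm1_triangle norm1_scale)

lemma linear_form_on_pairing: "Bseq u \<Longrightarrow> linear_form_on ell1 (pairing u)"
  unfolding linear_form_on_def pairing_def
  by (simp add: summable_mult_ell1 suminf_add suminf_mult distrib_left mult.left_commute)

lemma pairing_le_norm1:
  assumes "\<And>k. \<bar>u k\<bar> \<le> B" "x \<in> ell1"
  shows "pairing u x \<le> B * norm1 x"
proof -
  have "Bseq u" using assms(1) by (intro BseqI') simp
  have "u k * x k \<le> B * \<bar>x k\<bar>" for k
    using assms(1)[of k] abs_ge_self[of "u k * x k"] mult_right_mono[of "\<bar>u k\<bar>" B "\<bar>x k\<bar>"]
    by (simp add: abs_mult)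
  then have "pairing u x \<le> (\<Sum>k. B * \<bar>x k\<bar>)"
    unfolding pairing_def using assms(2) \<open>Bseq u\<close>
    by (intro suminf_le summable_mult_ell1) (auto simp: ell1_def intro: summable_mult)
  also have "\<dots> = B * norm1 x" using assms(2) by (simp add: norm1_def ell1_def suminf_mult)
  finally show ?thesis .
qed

lemma pairing_sum_left:
  assumes "finite J" "\<And>j. j \<in> J \<Longrightarrow> Bseq (w j)" "x \<in> ell1"
  shows "pairing (\<lambda>k. \<Sum>j\<in>J. c j * w j k) x = (\<Sum>j\<in>J. c j * pairing (w j) x)"
proof -
  have "pairing (\<lambda>k. \<Sum>j\<in>J. c j * w j k) x = (\<Sum>k. \<Sum>j\<in>J. c j * (w j k * x k))"
    unfolding pairing_def by (simp add: sum_distrib_right mult.assoc)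
  also have "\<dots> = (\<Sum>j\<in>J. \<Sum>k. c j * (w j k * x k))"
    using assms by (intro suminf_sum summable_mult summable_mult_ell1)
  also have "\<dots> = (\<Sum>j\<in>J. c j * pairing (w j) x)"
    unfolding pairing_def using assms by (intro sum.cong refl suminf_mult summable_mult_ell1)
  finally show ?thesis .
qed

lemma unitseq_ell1: "unitseq j \<in> ell1"
  unfolding ell1_def unitseq_def by (auto intro: summable_finite[of "{j}"])

lemma pairing_unitseq: "pairing u (\<lambda>k. t * unitseq j k) = t * u j"
  unfolding pairing_def unitseq_def by (subst suminf_finite[of "{j}"]) auto

lemma norm1_unitseq: "norm1 (\<lambda>k. t * unitseq j k) = \<bar>t\<bar>"
  unfolding norm1_def unitseq_def by (subst suminf_finite[of "{j}"]) auto

lemma sum_unitseq: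
  assumes "finite F"
  shows "(\<Sum>j\<in>F. a j * unitseq j k) = (if k \<in> F then a k else 0)"
proof -
  have "(\<Sum>j\<in>F. a j * unitseq j k) = (\<Sum>j\<in>F. if k = j then a j else 0)"
    by (intro sum.cong) (auto simp: unitseq_def)
  then show ?thesis using assms by (simp add: sum.delta')
qed

section \<open>Minimal-norm interpolation in ell1\<close>

lemma abs_le_1_if_pairing_le_norm1:
  assumes "\<And>x. x \<in> ell1 \<Longrightarrow> pairing u x \<le> norm1 x"
  shows "\<bar>u k\<bar> \<le> 1"
  using assms[OF ell1_scale[OF unitseq_ell1, of 1 k]] assms[OF ell1_scale[OF unitseq_ell1, of "-1" k]]
  by (simp only: pairing_unitseq norm1_unitseq)

lemma co_Vset_mult_eq:
  assumes "Bseq u" "z \<in> co (Vset u)"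
  shows "u k * z k = supnorm u * \<bar>z k\<bar>"
proof -
  obtain S w where S: "finite S" "S \<subseteq> Vset u" "\<forall>v\<in>S. 0 \<le> w v"
    and z: "z = (\<lambda>k. \<Sum>v\<in>S. w v * v k)"
    using assms(2) unfolding co_def by blast
  have vertex: "u k * v k = supnorm u * \<bar>v k\<bar>" if v: "v \<in> Vset u" for v
  proof -
    obtain j where "\<bar>u j\<bar> = supnorm u" "v = (\<lambda>k. sgn (u j) * unitseq j k)"
      using v by (auto simp: Vset_def maxidx_def)
    then show ?thesis by (auto simp: unitseq_def sgn_if)
  qed
  have "supnorm u * \<bar>z k\<bar> \<le> supnorm u * (\<Sum>v\<in>S. w v * \<bar>v k\<bar>)"
    unfolding z using S(3) supnorm_nonneg[OF assms(1)]
    by (intro mult_left_mono order_trans[OF sum_abs]) (auto simp: abs_mult)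
  also have "\<dots> = (\<Sum>v\<in>S. w v * (supnorm u * \<bar>v k\<bar>))"
    by (simp add: sum_distrib_left mult.left_commute)
  also have "\<dots> = (\<Sum>v\<in>S. w v * (u k * v k))"
    using S(2) vertex by (intro sum.cong) auto
  also have "\<dots> = u k * z k"
    unfolding z by (simp add: sum_distrib_left mult.left_commute)
  finally have "supnorm u * \<bar>z k\<bar> \<le> u k * z k" .
  moreover have "u k * z k \<le> supnorm u * \<bar>z k\<bar>"
    using abs_le_supnorm[OF assms(1), of k] abs_ge_self[of "u k * z k"]
      mult_right_mono[of "\<bar>u k\<bar>" "supnorm u" "\<bar>z k\<bar>"]
    by (simp add: abs_mult)
  ultimately show ?thesis by linarith
qed

lemma pairing_co_Vset:
  assumes "Bseq u" "z \<in> co (Vset u)" "x = (\<lambda>k. supnorm u * z k)" "x \<in> ell1"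
  shows "pairing u x = supnorm u * norm1 x"
proof -
  have "u k * x k = supnorm u * \<bar>x k\<bar>" for k
    using co_Vset_mult_eq[OF assms(1,2), of k] supnorm_nonneg[OF assms(1)]
    unfolding assms(3) by (simp add: abs_mult algebra_simps)
  then show ?thesis
    using assms(4) unfolding pairing_def norm1_def ell1_def by (simp add: suminf_mult)
qed

lemma minimal_if_dual_certificate:
  fixes m :: nat and us :: "nat \<Rightarrow> nat \<Rightarrow> real" and c :: "nat \<Rightarrow> real"
  defines "u \<equiv> \<lambda>k. \<Sum>j\<in>{1..m}. c j * us j k"
  assumes us: "\<And>j. j \<in> {1..m} \<Longrightarrow> us j \<in> c0"
    and xh: "xh \<in> Mset m us y" and x: "x \<in> Mset m us y"
    and z: "z \<in> co (Vset u)" and xh_eq: "xh = (\<lambda>k. supnorm u * z k)"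
  shows "norm1 xh \<le> norm1 x"
proof -
  have ell1: "xh \<in> ell1" "x \<in> ell1" using xh x by (auto simp: Mset_def)
  have "Bseq u" unfolding u_def using us by (intro c0_imp_Bseq c0_lincomb) auto
  have "supnorm u * norm1 xh = pairing u xh"
    using pairing_co_Vset[OF \<open>Bseq u\<close> z xh_eq ell1(1)] by simp
  also have "\<dots> = pairing u x"
  proof -
    have "pairing u v = (\<Sum>j\<in>{1..m}. c j * pairing (us j) v)" if "v \<in> ell1" for v
      unfolding u_def using that us by (intro pairing_sum_left c0_imp_Bseq) auto
    then show ?thesis using xh x ell1 by (simp add: Mset_def)
  qed
  also have "\<dots> \<le> supnorm u * norm1 x"
    using abs_le_supnorm[OF \<open>Bseq u\<close>] ell1(2) by (rule pairing_le_norm1)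
  finally have le: "supnorm u * norm1 xh \<le> supnorm u * norm1 x" .
  show ?thesis
  proof (cases "supnorm u = 0")
    case True
    then show ?thesis using xh_eq norm1_nonneg[OF ell1(2)] by (simp add: norm1_def)
  next
    case False
    then show ?thesis using le supnorm_nonneg[OF \<open>Bseq u\<close>] by (simp add: mult_le_cancel_left)
  qed
qed

lemma minimal_norm1_homogeneous:
  assumes us: "\<And>j. j \<in> {1..m} \<Longrightarrow> Bseq (us j)"
    and xh: "xh \<in> ell1" "\<forall>x'\<in>Mset m us y. norm1 xh \<le> norm1 x'"
    and x: "x \<in> ell1" "\<And>j. j \<in> {1..m} \<Longrightarrow> pairing (us j) x = t * y j"
  shows "t * norm1 xh \<le> norm1 x"
proof (cases "t > 0")
  case False
  then show ?thesis
    using norm1_nonneg[OF xh(1)] norm1_nonneg[OF x(1)] by (meson mult_nonpos_nonneg not_less order_trans)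
next
  case True
  have "pairing (us j) (\<lambda>k. (1 / t) * x k) = y j" if "j \<in> {1..m}" for j
    using linear_form_onD(2)[OF linear_form_on_pairing[OF us[OF that]] x(1), of "1 / t"] x(2)[OF that] True
    by simp
  then have "(\<lambda>k. (1 / t) * x k) \<in> Mset m us y" using ell1_scale[OF x(1), of "1 / t"] by (simp add: Mset_def)
  then have "norm1 xh \<le> norm1 x / t" using xh(2) norm1_scale[OF x(1), of "1 / t"] True by auto
  then show ?thesis using True by (simp add: pos_le_divide_eq mult.commute)
qed

(* On the common kernel of the constraints, L x is a multiple t * y of y and the left-hand
   functional is t * norm1 xh; minimality of xh against x / t bounds it by norm1 x. *)
lemma minimal_norm1_dual_bound:
  fixes m :: nat and us :: "nat \<Rightarrow> nat \<Rightarrow> real"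
  assumes us: "\<And>j. j \<in> {1..m} \<Longrightarrow> Bseq (us j)"
    and xh: "xh \<in> ell1" and min: "\<forall>x\<in>Mset m us y. norm1 xh \<le> norm1 x"
    and j0: "j0 \<in> {1..m}" "y j0 \<noteq> 0"
  defines "P j \<equiv> pairing (us j)"
  shows "\<exists>d. \<forall>x\<in>ell1.
    norm1 xh / y j0 * P j0 x - (\<Sum>j\<in>{1..m}. d j * (y j0 * P j x - y j * P j0 x)) \<le> norm1 x"
proof (rule ell1.hahn_banach_finite_codim)
  have P: "linear_form_on ell1 (P j)" if "j \<in> {1..m}" for j
    unfolding P_def using us[OF that] by (rule linear_form_on_pairing)
  show "linear_form_on ell1 (\<lambda>x. y j0 * P j x - y j * P j0 x)" if "j \<in> {1..m}" for j
    using P that j0(1) by (intro linear_form_on_diff linear_form_on_scale)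
  show "linear_form_on ell1 (\<lambda>x. norm1 xh / y j0 * P j0 x)"
    using P j0(1) by (intro linear_form_on_scale)
  show "norm1 xh / y j0 * P j0 x \<le> norm1 x"
    if x: "x \<in> ell1" "\<forall>j\<in>{1..m}. y j0 * P j x - y j * P j0 x = 0" for x
  proof -
    have "pairing (us j) x = P j0 x / y j0 * y j" if "j \<in> {1..m}" for j
      using x(2) that j0(2) unfolding P_def by (auto simp: field_simps)
    then have "P j0 x / y j0 * norm1 xh \<le> norm1 x"
      using us xh min x(1) by (intro minimal_norm1_homogeneous) auto
    then show ?thesis by (simp add: mult.commute)
  qed
qed simp

lemma exists_norming_lincomb:
  fixes m :: nat and us :: "nat \<Rightarrow> nat \<Rightarrow> real"
  assumes us: "\<And>j. j \<in> {1..m} \<Longrightarrow> Bseq (us j)"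
    and xh: "xh \<in> Mset m us y" and min: "\<forall>x\<in>Mset m us y. norm1 xh \<le> norm1 x"
  shows "\<exists>c. (\<forall>x\<in>ell1. pairing (\<lambda>k. \<Sum>j\<in>{1..m}. c j * us j k) x \<le> norm1 x)
             \<and> pairing (\<lambda>k. \<Sum>j\<in>{1..m}. c j * us j k) xh = norm1 xh"
proof (cases "\<forall>j\<in>{1..m}. y j = 0")
  case True
  then have "(\<lambda>k. 0) \<in> Mset m us y" by (simp add: Mset_def ell1_def pairing_def)
  then have "norm1 xh = 0"
    using min xh norm1_nonneg by (fastforce simp: norm1_def Mset_def)
  then show ?thesis using norm1_nonneg by (intro exI[of _ "\<lambda>_. 0"]) (simp add: pairing_def)
next
  case False
  then obtain j0 where j0: "j0 \<in> {1..m}" "y j0 \<noteq> 0" by blast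
  have xh1: "xh \<in> ell1" and P_xh: "\<And>j. j \<in> {1..m} \<Longrightarrow> pairing (us j) xh = y j"
    using xh by (auto simp: Mset_def)
  define r where "r = norm1 xh"
  define P where "P j = pairing (us j)" for j
  define \<phi> where "\<phi> x = r / y j0 * P j0 x" for x
  define \<psi> where "\<psi> j x = y j0 * P j x - y j * P j0 x" for j x
  obtain d where d: "\<forall>x\<in>ell1. \<phi> x - (\<Sum>j\<in>{1..m}. d j * \<psi> j x) \<le> norm1 x"
    using minimal_norm1_dual_bound[OF us xh1 min j0] unfolding \<phi>_def \<psi>_def P_def r_def by blast
  define K where "K = r / y j0 + (\<Sum>j\<in>{1..m}. d j * y j)"
  define c where "c j = (if j = j0 then K else 0) - d j * y j0" for j
  have pairing_c: "pairing (\<lambda>k. \<Sum>j\<in>{1..m}. c j * us j k) x = \<phi> x - (\<Sum>j\<in>{1..m}. d j * \<psi> j x)"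
    if "x \<in> ell1" for x
  proof -
    have "pairing (\<lambda>k. \<Sum>j\<in>{1..m}. c j * us j k) x = (\<Sum>j\<in>{1..m}. c j * P j x)"
      unfolding P_def using us that by (intro pairing_sum_left) auto
    also have "\<dots> = (\<Sum>j\<in>{1..m}. if j = j0 then K * P j x else 0) - (\<Sum>j\<in>{1..m}. d j * y j0 * P j x)"
      unfolding c_def sum_subtractf[symmetric] by (intro sum.cong) (auto simp: algebra_simps)
    also have "\<dots> = K * P j0 x - y j0 * (\<Sum>j\<in>{1..m}. d j * P j x)"
      using j0(1) by (simp add: sum.delta' sum_distrib_left mult.assoc mult.left_commute)
    also have "\<dots> = \<phi> x - (\<Sum>j\<in>{1..m}. d j * \<psi> j x)"
      unfolding K_def \<phi>_def \<psi>_def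
      by (simp add: sum_subtractf sum_distrib_left sum_distrib_right algebra_simps)
    finally show ?thesis .
  qed
  have "pairing (\<lambda>k. \<Sum>j\<in>{1..m}. c j * us j k) xh = r"
    using pairing_c[OF xh1] j0 P_xh by (simp add: \<phi>_def \<psi>_def P_def)
  then show ?thesis using d pairing_c r_def by (intro exI[of _ c]) auto
qed

lemma norming_mult_eq_abs:
  assumes "\<And>k. \<bar>u k\<bar> \<le> 1" "x \<in> ell1" "pairing u x = norm1 x"
  shows "u k * x k = \<bar>x k\<bar>"
proof -
  have le: "u k * x k \<le> \<bar>x k\<bar>" for k
    using assms(1)[of k] abs_ge_self[of "u k * x k"] mult_right_mono[of "\<bar>u k\<bar>" 1 "\<bar>x k\<bar>"]
    by (simp add: abs_mult)
  have "Bseq u" using assms(1) by (intro BseqI') simp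
  then have sums: "summable (\<lambda>k. \<bar>x k\<bar>)" "summable (\<lambda>k. u k * x k)"
    using assms(2) summable_mult_ell1 by (auto simp: ell1_def)
  then have "(\<Sum>k. \<bar>x k\<bar> - u k * x k) = 0"
    using assms(3) by (simp add: suminf_diff[symmetric] norm1_def pairing_def)
  then have "\<forall>k. \<bar>x k\<bar> - u k * x k = 0"
    using sums le by (simp add: suminf_eq_zero_iff summable_diff)
  then show ?thesis by simp
qed

lemma mem_co_Vset:
  assumes "finite F" "F \<subseteq> maxidx u" "\<And>j. j \<in> F \<Longrightarrow> u j \<noteq> 0"
    and "\<And>j. j \<in> F \<Longrightarrow> 0 \<le> w j" "sum w F = 1"
  shows "(\<lambda>k. \<Sum>j\<in>F. w j * sgn (u j) * unitseq j k) \<in> co (Vset u)"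
proof -
  define e where "e j = (\<lambda>k. sgn (u j) * unitseq j k)" for j
  have e_apply: "e j k = sgn (u j) * unitseq j k" for j k by (simp add: e_def)
  have inj: "inj_on e F"
  proof (rule inj_onI)
    fix i j assume "i \<in> F" "j \<in> F" "e i = e j"
    then have "e i i = e j i" by simp
    then show "i = j"
      using assms(3)[OF \<open>i \<in> F\<close>] by (auto simp: e_def unitseq_def sgn_0_0 split: if_splits)
  qed
  define w' where "w' v = w (the_inv_into F e v)" for v
  have w': "w' (e j) = w j" if "j \<in> F" for j
    unfolding w'_def using the_inv_into_f_f[OF inj that] by simp
  show ?thesis
    unfolding co_def
  proof (intro CollectI exI[of _ "e ` F"] exI[of _ w'] conjI)
    show "finite (e ` F)" using assms(1) by simp
    show "e ` F \<subseteq> Vset u" using assms(2) by (auto simp: Vset_def e_def)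
    show "\<forall>v\<in>e ` F. 0 \<le> w' v" using assms(4) w' by auto
    show "sum w' (e ` F) = 1" using assms(5) w' by (simp add: sum.reindex[OF inj])
    show "(\<lambda>k. \<Sum>j\<in>F. w j * sgn (u j) * unitseq j k) = (\<lambda>k. \<Sum>v\<in>e ` F. w' v * v k)"
    proof
      fix k
      have "(\<Sum>v\<in>e ` F. w' v * v k) = (\<Sum>j\<in>F. w' (e j) * e j k)" by (simp add: sum.reindex[OF inj])
      also have "\<dots> = (\<Sum>j\<in>F. w j * sgn (u j) * unitseq j k)"
        by (intro sum.cong) (auto simp: w' e_apply mult.assoc)
      finally show "(\<Sum>j\<in>F. w j * sgn (u j) * unitseq j k) = (\<Sum>v\<in>e ` F. w' v * v k)" ..
    qed
  qed
qed

lemma co_Vset_if_norming: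
  assumes "u \<in> c0" "\<And>k. \<bar>u k\<bar> \<le> 1" "x \<in> ell1" "pairing u x = norm1 x" "x \<noteq> (\<lambda>k. 0)"
  shows "supnorm u = 1 \<and> (\<exists>z\<in>co (Vset u). x = (\<lambda>k. norm1 x * z k))"
proof -
  define F where "F = {k. x k \<noteq> 0}"
  have sign: "u k * x k = \<bar>x k\<bar>" for k using assms(2-4) by (rule norming_mult_eq_abs)
  have unit: "\<bar>u k\<bar> = 1" "x k = \<bar>x k\<bar> * sgn (u k)" if "k \<in> F" for k
  proof -
    have "\<bar>u k\<bar> * \<bar>x k\<bar> = \<bar>x k\<bar>" using arg_cong[OF sign[of k], of abs] by (simp add: abs_mult)
    then show "\<bar>u k\<bar> = 1" using that by (simp add: F_def)
    then show "x k = \<bar>x k\<bar> * sgn (u k)"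
      using sign[of k] by (cases "u k > 0") (auto simp: sgn_if abs_if split: if_splits)
  qed
  have fin: "finite F"
    using unit(1) by (intro finite_subset[OF _ c0_finite_abs_ge[OF assms(1), of 1]]) auto
  obtain k0 where "k0 \<in> F" using assms(5) by (auto simp: F_def)
  have sup1: "supnorm u = 1"
    using supnorm_le[of u, OF assms(2)] abs_le_supnorm[OF c0_imp_Bseq[OF assms(1)], of k0]
      unit(1)[OF \<open>k0 \<in> F\<close>]
    by linarith
  have norm1_F: "norm1 x = (\<Sum>j\<in>F. \<bar>x j\<bar>)"
    unfolding norm1_def by (rule suminf_finite[OF fin]) (simp add: F_def)
  have "norm1 x \<noteq> 0" using norm1_eq_0_iff[OF assms(3)] assms(5) by simp
  then have pos: "norm1 x > 0" using norm1_nonneg[OF assms(3)] by linarith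
  define w where "w j = \<bar>x j\<bar> / norm1 x" for j
  define z where "z = (\<lambda>k. \<Sum>j\<in>F. w j * sgn (u j) * unitseq j k)"
  have "z \<in> co (Vset u)"
    unfolding z_def
  proof (rule mem_co_Vset[OF fin])
    show "F \<subseteq> maxidx u" using unit(1) sup1 by (auto simp: maxidx_def)
    show "u j \<noteq> 0" if "j \<in> F" for j using unit(1)[OF that] by auto
    show "0 \<le> w j" for j using pos by (simp add: w_def)
    show "sum w F = 1" using pos by (simp add: w_def norm1_F sum_divide_distrib[symmetric])
  qed
  moreover have "x = (\<lambda>k. norm1 x * z k)"
  proof
    fix k
    show "x k = norm1 x * z k"
      unfolding z_def sum_unitseq[OF fin] using unit(2)[of k] pos by (simp add: w_def F_def)
  qed
  ultimately show ?thesis using sup1 by blast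
qed

lemma dual_certificate_if_minimal:
  fixes m :: nat and us :: "nat \<Rightarrow> nat \<Rightarrow> real"
  assumes us: "\<And>j. j \<in> {1..m} \<Longrightarrow> us j \<in> c0"
    and xh: "xh \<in> Mset m us y" and min: "\<forall>x\<in>Mset m us y. norm1 xh \<le> norm1 x"
  shows "\<exists>c. let u = (\<lambda>k. \<Sum>j\<in>{1..m}. c j * us j k) in \<exists>z\<in>co (Vset u). xh = (\<lambda>k. supnorm u * z k)"
proof (cases "xh = (\<lambda>k. 0)")
  case True
  have "(\<lambda>k. 0) \<in> co (Vset (\<lambda>k. 0))"
    unfolding co_def Vset_def maxidx_def
    by (intro CollectI exI[of _ "{\<lambda>k. 0}"] exI[of _ "\<lambda>_. 1"]) (auto simp: supnorm_def)
  then show ?thesis using True by (intro exI[of _ "\<lambda>_. 0"]) (auto simp: Let_def supnorm_def)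
next
  case False
  define r where "r = norm1 xh"
  have xh1: "xh \<in> ell1" using xh by (simp add: Mset_def)
  have "norm1 xh \<noteq> 0" using False norm1_eq_0_iff[OF xh1] by simp
  then have "r > 0" using norm1_nonneg[OF xh1] unfolding r_def by linarith
  obtain c where c_le: "\<forall>x\<in>ell1. pairing (\<lambda>k. \<Sum>j\<in>{1..m}. c j * us j k) x \<le> norm1 x"
    and c_xh: "pairing (\<lambda>k. \<Sum>j\<in>{1..m}. c j * us j k) xh = norm1 xh"
    using exists_norming_lincomb[OF c0_imp_Bseq[OF us] xh min] by blast
  define u where "u = (\<lambda>k. \<Sum>j\<in>{1..m}. c j * us j k)"
  have u_c0: "u \<in> c0" unfolding u_def using us by (intro c0_lincomb) auto
  have u_le: "\<bar>u k\<bar> \<le> 1" for k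
    using c_le unfolding u_def by (intro abs_le_1_if_pairing_le_norm1) auto
  have "pairing u xh = norm1 xh" using c_xh by (simp add: u_def)
  then obtain z where sup1: "supnorm u = 1" and z: "z \<in> co (Vset u)" and xh_z: "xh = (\<lambda>k. r * z k)"
    using co_Vset_if_norming[OF u_c0 u_le xh1 _ False] unfolding r_def by blast
  have "Bseq u" using u_c0 by (rule c0_imp_Bseq)
  have "(\<lambda>k. \<Sum>j\<in>{1..m}. r * c j * us j k) = (\<lambda>k. r * u k)"
    unfolding u_def by (simp add: sum_distrib_left mult.assoc)
  then show ?thesis
    using z xh_z sup1 \<open>r > 0\<close> Vset_scale[OF \<open>Bseq u\<close>] supnorm_scale[OF \<open>Bseq u\<close>]
    by (intro exI[of _ "\<lambda>j. r * c j"]) (auto simp: Let_def)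
qed

theorem mainTheorem8:
  fixes m :: nat and us :: "nat \<Rightarrow> nat \<Rightarrow> real" and y :: "nat \<Rightarrow> real"
    and xh :: "nat \<Rightarrow> real"
  assumes "\<forall>j\<in>{1..m}. us j \<in> c0"
    and "lin_indep_family m us"
    and "xh \<in> ell1"
  shows "(xh \<in> Mset m us y \<and> (\<forall>x\<in>Mset m us y. norm1 xh \<le> norm1 x)) \<longleftrightarrow>
         (xh \<in> Mset m us y \<and>
          (\<exists>c :: nat \<Rightarrow> real.
             let u = (\<lambda>k. \<Sum>j\<in>{1..m}. c j * us j k) in
             (\<exists>z\<in>co (Vset u). xh = (\<lambda>k. supnorm u * z k))))"
  using dual_certificate_if_minimal[of m us xh y] minimal_if_dual_certificate[of m us xh y]
    assms(1) unfolding Let_def by blast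

end
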